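(* Let $G=(V,E)$ be a finite graph satisfying the $CDE(n,-K)$ condition for some constants $n>0$, $K>0$, and let $u:V\times[0,+\infty)\to(0,+\infty)$ be a positive solution of the heat equation $\partial_t u=\Delta u$ on $V$. Then $$\frac{\Gamma(\sqrt{u})}{u}-\frac{\partial_{t}(\sqrt{u})}{\sqrt{u}}\leq \frac{n}{2t}+\sqrt{\tfrac{1}{2}nKD_{\mu}(D_{w}+1)}\qquad\text{for all } t>0 \text{ and all vertices}.$$
   Context: Graphs: $G=(V,E)$ is a connected, locally finite graph; each edge $xy$ carries a weight $w_{xy}>0$ (possibly $w_{xy}\neq w_{yx}$), and $\mu:V\to(0,\infty)$ is a vertex measure. Write $y\sim x$ if $xy\in E$, $\deg(x)=\sum_{y\sim x}w_{xy}<\infty$, $D_\mu=\sup_{x\in V}\deg(x)/\mu(x)$, $D_w=\sup_{x\sim y}\deg(x)/w_{xy}$. The Laplacian is $\Delta f(x)=\frac{1}{\mu(x)}\sum_{y\sim x}w_{xy}(f(y)-f(x))$. The gradient forms are $2\Gamma(f,g)=\Delta(fg)-f\Delta g-g\Delta f$, $2\Gamma_2(f,g)=\Delta\Gamma(f,g)-\Gamma(f,\Delta g)-\Gamma(\Delta f,g)$, $\Gamma(f)=\Gamma(f,f)$, $\Gamma_2(f)=\Gamma_2(f,f)$. The graph satisfies $CDE(n,K)$ ($n>0$, $K\in\mathbb R$) if for every $f:V\to(0,\infty)$ and every vertex, $\widetilde\Gamma_2(f)\ge\frac1n(\Delta f)^2+K\Gamma(f)$, where $\widetilde\Gamma_2(f)=\Gamma_2(f)-\Gamma\big(f,\frac{\Gamma(f)}{f}\big)$.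 A positive solution of the heat equation on a set $U\subset V$ is a function $u:V\times[0,\infty)\to(0,\infty)$, continuously differentiable in $t$, with $\partial_t u(x,t)=\Delta u(\cdot,t)(x)$ for all $x\in U$, $t\ge 0$; here $\sqrt u$, $\Gamma(\sqrt u)$ etc. are taken at each fixed time. *)

theory Defs
  imports "HOL-Analysis.Analysis"
begin

text \<open>A weighted graph: vertex set V (finite), symmetric irreflexive adjacency E,
  edge weights w x y (positive on edges, not necessarily symmetric), vertex measure mu.\<close>

definition nbrs :: "('v \<Rightarrow> 'v \<Rightarrow> bool) \<Rightarrow> 'v set \<Rightarrow> 'v \<Rightarrow> 'v set" where
  "nbrs E V x = {y \<in> V. E x y}"

definition graph_deg :: "'v set \<Rightarrow> ('v \<Rightarrow> 'v \<Rightarrow> bool) \<Rightarrow> ('v \<Rightarrow> 'v \<Rightarrow> real) \<Rightarrow> 'v \<Rightarrow> real" where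
  "graph_deg V E w x = (\<Sum>y\<in>nbrs E V x. w x y)"

definition laplacian :: "'v set \<Rightarrow> ('v \<Rightarrow> 'v \<Rightarrow> bool) \<Rightarrow> ('v \<Rightarrow> 'v \<Rightarrow> real) \<Rightarrow> ('v \<Rightarrow> real)
    \<Rightarrow> ('v \<Rightarrow> real) \<Rightarrow> 'v \<Rightarrow> real" where
  "laplacian V E w mu f x = (1 / mu x) * (\<Sum>y\<in>nbrs E V x. w x y * (f y - f x))"

definition Gam :: "'v set \<Rightarrow> ('v \<Rightarrow> 'v \<Rightarrow> bool) \<Rightarrow> ('v \<Rightarrow> 'v \<Rightarrow> real) \<Rightarrow> ('v \<Rightarrow> real)
    \<Rightarrow> ('v \<Rightarrow> real) \<Rightarrow> ('v \<Rightarrow> real) \<Rightarrow> 'v \<Rightarrow> real" where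
  "Gam V E w mu f g x = (laplacian V E w mu (\<lambda>y. f y * g y) x
      - f x * laplacian V E w mu g x - g x * laplacian V E w mu f x) / 2"

definition Gam2 :: "'v set \<Rightarrow> ('v \<Rightarrow> 'v \<Rightarrow> bool) \<Rightarrow> ('v \<Rightarrow> 'v \<Rightarrow> real) \<Rightarrow> ('v \<Rightarrow> real)
    \<Rightarrow> ('v \<Rightarrow> real) \<Rightarrow> ('v \<Rightarrow> real) \<Rightarrow> 'v \<Rightarrow> real" where
  "Gam2 V E w mu f g x = (laplacian V E w mu (Gam V E w mu f g) x
      - Gam V E w mu f (laplacian V E w mu g) x - Gam V E w mu (laplacian V E w mu f) g x) / 2"

definition Gam2_tilde :: "'v set \<Rightarrow> ('v \<Rightarrow> 'v \<Rightarrow> bool) \<Rightarrow> ('v \<Rightarrow> 'v \<Rightarrow> real) \<Rightarrow> ('v \<Rightarrow> real)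
    \<Rightarrow> ('v \<Rightarrow> real) \<Rightarrow> 'v \<Rightarrow> real" where
  "Gam2_tilde V E w mu f x = Gam2 V E w mu f f x
      - Gam V E w mu f (\<lambda>y. Gam V E w mu f f y / f y) x"

definition CDE :: "'v set \<Rightarrow> ('v \<Rightarrow> 'v \<Rightarrow> bool) \<Rightarrow> ('v \<Rightarrow> 'v \<Rightarrow> real) \<Rightarrow> ('v \<Rightarrow> real)
    \<Rightarrow> real \<Rightarrow> real \<Rightarrow> bool" where
  "CDE V E w mu n K \<longleftrightarrow> (\<forall>f. (\<forall>x\<in>V. f x > 0) \<longrightarrow>
     (\<forall>x\<in>V. Gam2_tilde V E w mu f x \<ge> (1 / n) * (laplacian V E w mu f x)\<^sup>2 + K * Gam V E w mu f f x))"

definition D_mu :: "'v set \<Rightarrow> ('v \<Rightarrow> 'v \<Rightarrow> bool) \<Rightarrow> ('v \<Rightarrow> 'v \<Rightarrow> real) \<Rightarrow> ('v \<Rightarrow> real) \<Rightarrow> real" where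
  "D_mu V E w mu = (let S = {graph_deg V E w x / mu x | x. x \<in> V} in if S = {} then 0 else Max S)"

definition D_w :: "'v set \<Rightarrow> ('v \<Rightarrow> 'v \<Rightarrow> bool) \<Rightarrow> ('v \<Rightarrow> 'v \<Rightarrow> real) \<Rightarrow> real" where
  "D_w V E w = (let S = {graph_deg V E w x / w x y | x y. x \<in> V \<and> y \<in> V \<and> E x y}
                in if S = {} then 0 else Max S)"

definition weighted_graph :: "'v set \<Rightarrow> ('v \<Rightarrow> 'v \<Rightarrow> bool) \<Rightarrow> ('v \<Rightarrow> 'v \<Rightarrow> real) \<Rightarrow> ('v \<Rightarrow> real) \<Rightarrow> bool" where
  "weighted_graph V E w mu \<longleftrightarrow>
     (\<forall>x y. E x y \<longrightarrow> x \<in> V \<and> y \<in> V) \<and>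
     (\<forall>x y. E x y \<longrightarrow> E y x) \<and> (\<forall>x. \<not> E x x) \<and>
     (\<forall>x y. E x y \<longrightarrow> w x y > 0) \<and> (\<forall>x\<in>V. mu x > 0) \<and>
     (\<forall>x\<in>V. \<forall>y\<in>V. E\<^sup>*\<^sup>* x y)"

end

theory Submission
  imports Defs
begin

text \<open>For \<open>f = \<surd>u\<close> the left-hand side equals \<open>-\<Delta>f/f\<close>; let \<open>h\<close> be the
  maximum of \<open>H = -t \<Delta>f/f\<close> on \<open>V \<times> [0,T]\<close>, attained at \<open>(x,t)\<close>. The function \<open>-s f\<Delta>f - h f\<^sup>2\<close> is
  \<open>\<le> 0\<close> on \<open>V \<times> [0,t]\<close> and vanishes at \<open>(x,t)\<close>, so its time derivative at \<open>t\<close> is \<open>\<ge> 0\<close> and its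
  Laplacian at \<open>x\<close> is \<open>\<le> 0\<close>. Since \<open>\<partial>\<^sub>tf = \<Delta>f + \<Gamma>(f)/f\<close>, the identity
  \<open>2\<Gamma>\<^sub>2~(f) = \<partial>\<^sub>t(f\<Delta>f) - \<Delta>(f\<Delta>f)\<close> turns these two facts into \<open>2t\<Gamma>\<^sub>2~(f) \<le> -f\<Delta>f\<close> at \<open>(x,t)\<close>.
  Where \<open>\<Delta>f \<le> 0\<close> no neighbour exceeds \<open>D\<^sub>w f(x)\<close>, whence \<open>\<Gamma>(f) \<le> f\<^sup>2 D\<^sub>\<mu>(D\<^sub>w+1)/2\<close>; with
  \<open>CDE(n,-K)\<close> this gives \<open>h\<^sup>2 \<le> (n/2) h + (n K D\<^sub>\<mu>(D\<^sub>w+1)/2) t\<^sup>2\<close>, i.e. \<open>h \<le> n/2 + t \<surd>(\<dots>)\<close>.\<close>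

lemma Gam_eq_sum:
  "Gam V E w mu f g x = (\<Sum>y\<in>nbrs E V x. w x y * (f y - f x) * (g y - g x)) / (2 * mu x)"
proof -
  have "(\<Sum>y\<in>nbrs E V x. w x y * (f y * g y - f x * g x))
       - f x * (\<Sum>y\<in>nbrs E V x. w x y * (g y - g x))
       - g x * (\<Sum>y\<in>nbrs E V x. w x y * (f y - f x))
       = (\<Sum>y\<in>nbrs E V x. w x y * (f y - f x) * (g y - g x))"
    unfolding sum_distrib_left sum_subtractf[symmetric] by (rule sum.cong) (auto simp: algebra_simps)
  then show ?thesis
    unfolding Gam_def laplacian_def by (cases "mu x = 0") (simp_all add: field_simps)
qed

lemma laplacian_cong:
  assumes "\<And>y. y \<in> V \<Longrightarrow> f y = g y" "x \<in> V"
  shows "laplacian V E w mu f x = laplacian V E w mu g x"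
  unfolding laplacian_def nbrs_def using assms by (auto intro!: sum.cong)

lemma laplacian_diff:
  "laplacian V E w mu (\<lambda>y. f y - g y) x = laplacian V E w mu f x - laplacian V E w mu g x"
proof -
  have "(\<Sum>y\<in>nbrs E V x. w x y * (f y - g y - (f x - g x)))
      = (\<Sum>y\<in>nbrs E V x. w x y * (f y - f x)) - (\<Sum>y\<in>nbrs E V x. w x y * (g y - g x))"
    unfolding sum_subtractf[symmetric] by (rule sum.cong) (auto simp: algebra_simps)
  then show ?thesis unfolding laplacian_def by (simp only: right_diff_distrib)
qed

lemma laplacian_cmult:
  "laplacian V E w mu (\<lambda>y. c * f y) x = c * laplacian V E w mu f x"
  unfolding laplacian_def by (simp add: sum_distrib_left algebra_simps)

lemma Gam_add_right:
  "Gam V E w mu f (\<lambda>y. g y + h y) x = Gam V E w mu f g x + Gam V E w mu f h x"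
  unfolding Gam_eq_sum by (simp add: sum.distrib[symmetric] algebra_simps add_divide_distrib[symmetric])

lemma Gam_commute: "Gam V E w mu f g x = Gam V E w mu g f x"
  unfolding Gam_eq_sum by (simp add: algebra_simps)

lemma Gam2_tilde_eq:
  assumes pos: "\<And>y. y \<in> V \<Longrightarrow> 0 < f y" and x: "x \<in> V"
    and p: "p = (\<lambda>y. laplacian V E w mu f y + Gam V E w mu f f y / f y)"
  shows "2 * Gam2_tilde V E w mu f x = f x * laplacian V E w mu p x + p x * laplacian V E w mu f x
          - laplacian V E w mu (\<lambda>y. f y * laplacian V E w mu f y) x"
proof -
  let ?L = "laplacian V E w mu" and ?G = "Gam V E w mu"
  have "?L (?G f f) x = ?L (\<lambda>y. f y * p y - f y * ?L f y) x"
    by (rule laplacian_cong[OF _ x]) (use pos in \<open>fastforce simp: p field_simps\<close>)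
  also have "\<dots> = f x * ?L p x + p x * ?L f x + 2 * ?G f p x - ?L (\<lambda>y. f y * ?L f y) x"
    unfolding laplacian_diff by (simp add: Gam_def field_simps)
  finally have "?L (?G f f) x = f x * ?L p x + p x * ?L f x + 2 * ?G f p x - ?L (\<lambda>y. f y * ?L f y) x" .
  moreover have "?G f p x = ?G f (?L f) x + ?G f (\<lambda>y. ?G f f y / f y) x"
    unfolding p by (rule Gam_add_right)
  moreover have "2 * Gam2_tilde V E w mu f x
      = ?L (?G f f) x - 2 * ?G f (?L f) x - 2 * ?G f (\<lambda>y. ?G f f y / f y) x"
    unfolding Gam2_tilde_def Gam2_def using Gam_commute[of V E w mu "?L f" f x] by simp
  ultimately show ?thesis by linarith
qed

lemma laplacian_nonpos_at_local_max:
  assumes graph: "weighted_graph V E w mu" and x: "x \<in> V"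
    and max: "\<And>y. y \<in> nbrs E V x \<Longrightarrow> f y \<le> f x"
  shows "laplacian V E w mu f x \<le> 0"
proof -
  have "0 < mu x" using graph x unfolding weighted_graph_def by auto
  moreover have "w x y * (f y - f x) \<le> 0" if "y \<in> nbrs E V x" for y
  proof -
    have "0 < w x y" using graph that unfolding weighted_graph_def nbrs_def by auto
    then show ?thesis using max[OF that] by (simp add: mult_nonneg_nonpos)
  qed
  ultimately show ?thesis
    unfolding laplacian_def by (simp add: divide_nonpos_pos sum_nonpos)
qed

lemma laplacian_has_real_derivative:
  assumes "x \<in> V" "\<And>y. y \<in> V \<Longrightarrow> ((\<lambda>s. F s y) has_real_derivative F' y) (at t)"
  shows "((\<lambda>s. laplacian V E w mu (F s) x) has_real_derivative laplacian V E w mu F' x) (at t)"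
  unfolding laplacian_def using assms
  by (intro DERIV_cmult DERIV_sum DERIV_diff) (auto simp: nbrs_def)

lemma continuous_on_laplacian:
  assumes "x \<in> V" "\<And>y. y \<in> V \<Longrightarrow> continuous_on S (\<lambda>s. F s y)"
  shows "continuous_on S (\<lambda>s. laplacian V E w mu (F s) x)"
  unfolding laplacian_def using assms
  by (intro continuous_intros) (auto simp: nbrs_def)

lemma graph_deg_nonneg:
  assumes "weighted_graph V E w mu"
  shows "0 \<le> graph_deg V E w x"
  using assms unfolding graph_deg_def weighted_graph_def nbrs_def
  by (intro sum_nonneg) (simp add: less_imp_le)

lemma D_mu_ge:
  assumes "finite V" "x \<in> V"
  shows "graph_deg V E w x / mu x \<le> D_mu V E w mu"
proof -
  have "{graph_deg V E w x / mu x | x. x \<in> V} = (\<lambda>x. graph_deg V E w x / mu x) ` V" by auto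
  then show ?thesis unfolding D_mu_def Let_def using assms by auto
qed

lemma D_mu_nonneg:
  assumes "finite V" "weighted_graph V E w mu" "x \<in> V"
  shows "0 \<le> D_mu V E w mu"
proof -
  have "0 < mu x" using assms(2,3) unfolding weighted_graph_def by auto
  then have "0 \<le> graph_deg V E w x / mu x" using graph_deg_nonneg[OF assms(2), of x] by simp
  then show ?thesis using D_mu_ge[OF assms(1,3), of E w mu] by linarith
qed

lemma D_w_ge:
  assumes "finite V" "x \<in> V" "y \<in> V" "E x y"
  shows "graph_deg V E w x / w x y \<le> D_w V E w"
proof -
  let ?S = "{graph_deg V E w x / w x y | x y. x \<in> V \<and> y \<in> V \<and> E x y}"
  have "?S \<subseteq> (\<lambda>(x, y). graph_deg V E w x / w x y) ` (V \<times> V)" by auto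
  then have "finite ?S" using finite_subset assms(1) by blast
  moreover have "graph_deg V E w x / w x y \<in> ?S" using assms by auto
  ultimately show ?thesis unfolding D_w_def Let_def by auto
qed

lemma D_w_nonneg:
  assumes "finite V" "weighted_graph V E w mu"
  shows "0 \<le> D_w V E w"
proof (cases "\<exists>x y. x \<in> V \<and> y \<in> V \<and> E x y")
  case True
  then obtain x y where xy: "x \<in> V" "y \<in> V" "E x y" by blast
  then have "0 < w x y" using assms(2) unfolding weighted_graph_def by auto
  then have "0 \<le> graph_deg V E w x / w x y" using graph_deg_nonneg[OF assms(2), of x] by simp
  then show ?thesis using D_w_ge[of V x y E w] assms(1) xy by linarith
next
  case False
  then show ?thesis unfolding D_w_def by simp
qed

lemma weighted_sum_le_of_laplacian_nonpos:
  assumes graph: "weighted_graph V E w mu" and x: "x \<in> V"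
    and lap: "laplacian V E w mu f x \<le> 0"
  shows "(\<Sum>z\<in>nbrs E V x. w x z * f z) \<le> f x * graph_deg V E w x"
proof -
  have "0 < mu x" using graph x unfolding weighted_graph_def by auto
  then have "(\<Sum>z\<in>nbrs E V x. w x z * (f z - f x)) \<le> 0"
    using lap unfolding laplacian_def by (simp add: divide_le_0_iff)
  then show ?thesis
    unfolding graph_deg_def by (simp add: sum_distrib_left sum_subtractf algebra_simps)
qed

lemma neighbour_le_of_laplacian_nonpos:
  assumes fin: "finite V" and graph: "weighted_graph V E w mu"
    and pos: "\<And>y. y \<in> V \<Longrightarrow> 0 < f y" and x: "x \<in> V"
    and lap: "laplacian V E w mu f x \<le> 0" and y: "y \<in> nbrs E V x"
  shows "f y \<le> f x * D_w V E w"
proof -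
  let ?N = "nbrs E V x" and ?d = "graph_deg V E w x"
  have wpos: "\<And>z. z \<in> ?N \<Longrightarrow> 0 < w x z" using graph unfolding weighted_graph_def nbrs_def by auto
  have "w x y * f y \<le> (\<Sum>z\<in>?N. w x z * f z)"
    using fin y wpos pos by (intro member_le_sum) (auto simp: nbrs_def less_imp_le)
  then have "w x y * f y \<le> f x * ?d"
    using weighted_sum_le_of_laplacian_nonpos[OF graph x lap] by linarith
  then have "f y \<le> f x * (?d / w x y)" using wpos[OF y] by (simp add: field_simps)
  also have "\<dots> \<le> f x * D_w V E w"
    using D_w_ge[OF fin x, of y E w] y pos[OF x] by (intro mult_left_mono) (auto simp: nbrs_def)
  finally show ?thesis .
qed

lemma Gam_le_of_laplacian_nonpos:
  assumes fin: "finite V" and graph: "weighted_graph V E w mu"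
    and pos: "\<And>y. y \<in> V \<Longrightarrow> 0 < f y" and x: "x \<in> V"
    and lap: "laplacian V E w mu f x \<le> 0"
  shows "Gam V E w mu f f x \<le> (f x)\<^sup>2 * (D_mu V E w mu * (D_w V E w + 1)) / 2"
proof -
  let ?N = "nbrs E V x" and ?d = "graph_deg V E w x" and ?Dw = "D_w V E w"
  have wpos: "\<And>z. z \<in> ?N \<Longrightarrow> 0 < w x z" using graph unfolding weighted_graph_def nbrs_def by auto
  have mu: "0 < mu x" using graph x unfolding weighted_graph_def by auto
  have fN: "\<And>z. z \<in> ?N \<Longrightarrow> 0 < f z" using pos by (auto simp: nbrs_def)
  \<comment> \<open>\<open>(f z - f x)\<^sup>2 \<le> f z\<^sup>2 + f x\<^sup>2\<close>, and \<open>f z\<^sup>2 \<le> D\<^sub>w f x f z\<close> by the neighbour bound\<close>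
  have "(\<Sum>z\<in>?N. w x z * (f z - f x) * (f z - f x))
      \<le> (\<Sum>z\<in>?N. f x * ?Dw * (w x z * f z) + (f x)\<^sup>2 * w x z)"
  proof (rule sum_mono)
    fix z assume z: "z \<in> ?N"
    have "w x z * f z * f z \<le> w x z * f z * (f x * ?Dw)"
      using neighbour_le_of_laplacian_nonpos[OF fin graph pos x lap z] wpos[OF z] fN[OF z]
      by (intro mult_left_mono) auto
    moreover have "0 \<le> f x * (w x z * f z)" using pos[OF x] wpos[OF z] fN[OF z] by simp
    ultimately show "w x z * (f z - f x) * (f z - f x) \<le> f x * ?Dw * (w x z * f z) + (f x)\<^sup>2 * w x z"
      by (simp add: algebra_simps power2_eq_square)
  qed
  also have "\<dots> = f x * ?Dw * (\<Sum>z\<in>?N. w x z * f z) + (f x)\<^sup>2 * ?d"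
    unfolding graph_deg_def by (simp add: sum.distrib sum_distrib_left)
  also have "\<dots> \<le> f x * ?Dw * (f x * ?d) + (f x)\<^sup>2 * ?d"
    using weighted_sum_le_of_laplacian_nonpos[OF graph x lap] pos[OF x] D_w_nonneg[OF fin graph]
    by (intro add_right_mono mult_left_mono) auto
  also have "\<dots> = (f x)\<^sup>2 * (?Dw + 1) * ?d" by (simp add: algebra_simps power2_eq_square)
  finally have "Gam V E w mu f f x \<le> (f x)\<^sup>2 * (?Dw + 1) * ?d / (2 * mu x)"
    using mu unfolding Gam_eq_sum by (simp add: divide_right_mono)
  also have "\<dots> = (f x)\<^sup>2 * (?Dw + 1) * (?d / mu x) / 2" by simp
  also have "\<dots> \<le> (f x)\<^sup>2 * (?Dw + 1) * D_mu V E w mu / 2"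
    using D_mu_ge[OF fin x, of E w mu] D_w_nonneg[OF fin graph]
    by (intro divide_right_mono mult_left_mono) auto
  finally show ?thesis by (simp add: algebra_simps)
qed

lemma DERIV_nonneg_at_left_max:
  fixes \<phi> :: "real \<Rightarrow> real"
  assumes der: "(\<phi> has_real_derivative D) (at t)" and "a < t"
    and max: "\<And>s. a \<le> s \<Longrightarrow> s \<le> t \<Longrightarrow> \<phi> s \<le> \<phi> t"
  shows "0 \<le> D"
proof (rule ccontr)
  assume "\<not> 0 \<le> D"
  then obtain d where "0 < d" and d: "\<And>k. 0 < k \<Longrightarrow> k < d \<Longrightarrow> \<phi> t < \<phi> (t - k)"
    using DERIV_neg_dec_left[OF der] by force
  define k where "k = min d (t - a) / 2"
  have "0 < k" "k < d" "k \<le> t - a" using \<open>0 < d\<close> \<open>a < t\<close> unfolding k_def by auto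
  then show False using d max[of "t - k"] by fastforce
qed

lemma finite_family_attains_max:
  fixes g :: "'a \<Rightarrow> real \<Rightarrow> real"
  assumes "finite V" "V \<noteq> {}" "a \<le> b" "\<And>y. y \<in> V \<Longrightarrow> continuous_on {a..b} (g y)"
  obtains x t where "x \<in> V" "t \<in> {a..b}" "\<And>y s. y \<in> V \<Longrightarrow> s \<in> {a..b} \<Longrightarrow> g y s \<le> g x t"
proof -
  have "\<exists>s\<in>{a..b}. \<forall>r\<in>{a..b}. g y r \<le> g y s" if "y \<in> V" for y
    using continuous_attains_sup[OF compact_Icc _ assms(4)[OF that]] assms(3) by auto
  then obtain smax where smax: "\<And>y. y \<in> V \<Longrightarrow> smax y \<in> {a..b} \<and> (\<forall>r\<in>{a..b}. g y r \<le> g y (smax y))"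
    by metis
  let ?M = "(\<lambda>y. g y (smax y)) ` V"
  obtain x where "x \<in> V" "g x (smax x) = Max ?M"
    using Max_in[of ?M] assms(1,2) by (metis (no_types, lifting) finite_imageI image_iff image_is_empty)
  then have "x \<in> V" "\<And>y. y \<in> V \<Longrightarrow> g y (smax y) \<le> g x (smax x)"
    using assms(1) by auto
  then show thesis using smax by (intro that[of x "smax x"]) (auto, meson atLeastAtMost_iff order_trans)
qed

lemma le_add_mult_sqrt_of_square_le:
  fixes h a b t :: real
  assumes "0 \<le> a" "0 \<le> b" "0 \<le> t" and sq: "h\<^sup>2 \<le> a * h + b * t\<^sup>2"
  shows "h \<le> a + t * sqrt b"
proof (rule ccontr)
  assume "\<not> ?thesis"
  then have h: "a + t * sqrt b < h" by simp
  have r: "0 \<le> t * sqrt b" using assms by simp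
  have "(t * sqrt b) * (t * sqrt b) < h * (h - a)"
    using h r assms(1) by (intro mult_strict_mono) auto
  also have "\<dots> \<le> b * t\<^sup>2" using sq by (simp add: power2_eq_square algebra_simps)
  also have "\<dots> = (t * sqrt b) * (t * sqrt b)" using assms by (simp add: power2_eq_square)
  finally show False by simp
qed

lemma Li_Yau_bound_of_Gam2_tilde_le:
  assumes fin: "finite V" and graph: "weighted_graph V E w mu"
    and n: "0 < n" and K: "0 < K" and cde: "CDE V E w mu n (- K)"
    and pos: "\<And>y. y \<in> V \<Longrightarrow> 0 < f y" and x: "x \<in> V" and t: "0 < t"
    and Gam2: "2 * t * Gam2_tilde V E w mu f x \<le> - f x * laplacian V E w mu f x"
  shows "- t * laplacian V E w mu f x / f x
    \<le> n / 2 + t * sqrt (1/2 * n * K * D_mu V E w mu * (D_w V E w + 1))"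
proof -
  define C where "C = D_mu V E w mu * (D_w V E w + 1)"
  define B where "B = 1/2 * n * K * D_mu V E w mu * (D_w V E w + 1)"
  define h where "h = - t * laplacian V E w mu f x / f x"
  let ?Lf = "laplacian V E w mu f x" and ?Gf = "Gam V E w mu f f x"
  have C: "0 \<le> C" unfolding C_def using D_mu_nonneg[OF fin graph x] D_w_nonneg[OF fin graph] by simp
  have B: "B = 1/2 * n * K * C" unfolding B_def C_def by simp
  have fx: "0 < f x" using pos x by simp
  have "h \<le> n / 2 + t * sqrt B"
  proof (cases "0 < ?Lf")
    case True
    then have "h \<le> 0" unfolding h_def using t fx by (simp add: divide_nonpos_pos)
    moreover have "0 \<le> t * sqrt B" unfolding B using n K C t by simp
    ultimately show ?thesis using n by linarith
  next
    case False
    have hf: "h * f x = - t * ?Lf" unfolding h_def using fx by simp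
    then have sq: "t\<^sup>2 * ?Lf\<^sup>2 = h\<^sup>2 * (f x)\<^sup>2"
      by (metis power2_minus power_mult_distrib mult_minus_left)
    have "?Gf \<le> (f x)\<^sup>2 * C / 2"
      using Gam_le_of_laplacian_nonpos[of V E w mu f x] fin graph pos x False unfolding C_def
      by simp
    then have "(1 / n) * ?Lf\<^sup>2 - K * ((f x)\<^sup>2 * C / 2) \<le> (1 / n) * ?Lf\<^sup>2 - K * ?Gf"
      using K by simp
    also have "\<dots> \<le> Gam2_tilde V E w mu f x"
      using cde pos x unfolding CDE_def by auto
    finally have "2 * t\<^sup>2 * ((1 / n) * ?Lf\<^sup>2 - K * ((f x)\<^sup>2 * C / 2))
        \<le> t * (2 * t * Gam2_tilde V E w mu f x)"
      using t by (simp add: power2_eq_square mult_left_mono)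
    also have "\<dots> \<le> t * (- f x * ?Lf)" using Gam2 t by (intro mult_left_mono) auto
    also have "\<dots> = (h * f x) * f x" unfolding hf by (simp add: algebra_simps)
    also have "\<dots> = h * (f x)\<^sup>2" by (simp add: power2_eq_square)
    finally have "(2 / n) * (t\<^sup>2 * ?Lf\<^sup>2) - K * C * t\<^sup>2 * (f x)\<^sup>2 \<le> h * (f x)\<^sup>2"
      by (simp add: algebra_simps)
    then have "(f x)\<^sup>2 * ((2 / n) * h\<^sup>2 - K * C * t\<^sup>2) \<le> (f x)\<^sup>2 * h"
      unfolding sq by (simp add: algebra_simps)
    then have "(2 / n) * h\<^sup>2 - K * C * t\<^sup>2 \<le> h" using fx by simp
    then have "h\<^sup>2 \<le> n / 2 * h + B * t\<^sup>2" unfolding B using n by (simp add: field_simps)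
    then show ?thesis using le_add_mult_sqrt_of_square_le n K C t unfolding B by simp
  qed
  then show ?thesis unfolding h_def B_def .
qed

locale heat_solution =
  fixes V :: "'v set" and E :: "'v \<Rightarrow> 'v \<Rightarrow> bool" and w :: "'v \<Rightarrow> 'v \<Rightarrow> real"
    and mu :: "'v \<Rightarrow> real" and u ut :: "'v \<Rightarrow> real \<Rightarrow> real"
  assumes graph: "weighted_graph V E w mu"
    and u_pos: "\<And>x t. x \<in> V \<Longrightarrow> 0 \<le> t \<Longrightarrow> 0 < u x t"
    and u_deriv: "\<And>x t. x \<in> V \<Longrightarrow> 0 \<le> t \<Longrightarrow>
                    ((\<lambda>s. u x s) has_real_derivative ut x t) (at t within {0..})"
    and heat: "\<And>x t. x \<in> V \<Longrightarrow> 0 \<le> t \<Longrightarrow> ut x t = laplacian V E w mu (\<lambda>y. u y t) x"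
begin

abbreviation "L \<equiv> laplacian V E w mu"
abbreviation "G \<equiv> Gam V E w mu"

definition sqrt_u :: "real \<Rightarrow> 'v \<Rightarrow> real" where
  "sqrt_u t y = sqrt (u y t)"

definition li_yau :: "'v \<Rightarrow> real \<Rightarrow> real" where
  "li_yau y t = - t * L (sqrt_u t) y / sqrt_u t y"

lemma sqrt_u_pos: "y \<in> V \<Longrightarrow> 0 \<le> t \<Longrightarrow> 0 < sqrt_u t y"
  unfolding sqrt_u_def using u_pos by simp

lemma sqrt_u_square: "y \<in> V \<Longrightarrow> 0 \<le> t \<Longrightarrow> sqrt_u t y * sqrt_u t y = u y t"
  unfolding sqrt_u_def using u_pos by (simp add: less_imp_le)

lemma heat_sqrt_u: "x \<in> V \<Longrightarrow> 0 \<le> t \<Longrightarrow> ut x t = L (\<lambda>y. sqrt_u t y * sqrt_u t y) x"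
  using heat laplacian_cong[of V "\<lambda>y. sqrt_u t y * sqrt_u t y" "\<lambda>y. u y t"] sqrt_u_square by simp

lemma u_has_real_derivative: "x \<in> V \<Longrightarrow> 0 < t \<Longrightarrow> ((\<lambda>s. u x s) has_real_derivative ut x t) (at t)"
  using u_deriv[of x t] at_within_interior[of t "{0..}"] interior_Ici[of "-1" 0] by simp

lemma continuous_on_u: "x \<in> V \<Longrightarrow> continuous_on {0..} (u x)"
  by (rule DERIV_continuous_on[where D="ut x"]) (use u_deriv in auto)

lemma sqrt_u_has_real_derivative:
  assumes y: "y \<in> V" and t: "0 < t"
  shows "((\<lambda>s. sqrt_u s y) has_real_derivative L (sqrt_u t) y + G (sqrt_u t) (sqrt_u t) y / sqrt_u t y) (at t)"
proof -
  let ?f = "sqrt_u t"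
  have f: "0 < ?f y" using sqrt_u_pos y t by simp
  have "((\<lambda>s. sqrt_u s y) has_real_derivative ut y t / (2 * ?f y)) (at t)"
    using DERIV_chain2[OF DERIV_real_sqrt[OF u_pos[OF y]] u_has_real_derivative[OF y t]] t
    unfolding sqrt_u_def by (simp add: field_simps)
  moreover have "ut y t = 2 * G ?f ?f y + 2 * ?f y * L ?f y"
    unfolding heat_sqrt_u[OF y less_imp_le[OF t]] Gam_def by (simp add: field_simps)
  then have "ut y t / (2 * ?f y) = L ?f y + G ?f ?f y / ?f y" using f by (simp add: field_simps)
  ultimately show ?thesis by simp
qed

lemma continuous_on_li_yau: "y \<in> V \<Longrightarrow> continuous_on {0..T} (li_yau y)"
proof -
  assume y: "y \<in> V"
  have u: "\<And>z. z \<in> V \<Longrightarrow> continuous_on {0..T} (\<lambda>s. sqrt_u s z)"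
    unfolding sqrt_u_def
    by (intro continuous_intros continuous_on_subset[OF continuous_on_u]) auto
  have "\<forall>s\<in>{0..T}. sqrt_u s y \<noteq> 0" using sqrt_u_pos y by fastforce
  then show ?thesis
    unfolding li_yau_def using continuous_on_laplacian[OF y u] u[OF y]
    by (intro continuous_intros) auto
qed

lemma Li_Yau_expression_eq:
  assumes y: "y \<in> V" and t: "0 < t"
  shows "Gam V E w mu (\<lambda>z. sqrt (u z t)) (\<lambda>z. sqrt (u z t)) y / u y t
       - deriv (\<lambda>s. sqrt (u y s)) t / sqrt (u y t) = li_yau y t / t"
proof -
  let ?f = "sqrt_u t"
  have f: "0 < ?f y" using sqrt_u_pos y t by simp
  have "deriv (\<lambda>s. sqrt_u s y) t = L ?f y + G ?f ?f y / ?f y"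
    by (rule DERIV_imp_deriv[OF sqrt_u_has_real_derivative[OF y t]])
  then have "Gam V E w mu (\<lambda>z. sqrt (u z t)) (\<lambda>z. sqrt (u z t)) y / u y t
       - deriv (\<lambda>s. sqrt (u y s)) t / sqrt (u y t)
       = G ?f ?f y / (?f y * ?f y) - (L ?f y + G ?f ?f y / ?f y) / ?f y"
    using sqrt_u_square[OF y less_imp_le[OF t]] unfolding sqrt_u_def[abs_def] by simp
  also have "\<dots> = - L ?f y / ?f y" using f by (simp add: diff_divide_distrib add_divide_distrib)
  also have "\<dots> = li_yau y t / t" unfolding li_yau_def using t by simp
  finally show ?thesis .
qed

lemma li_yau_le_iff:
  assumes "y \<in> V" "0 \<le> s"
  shows "li_yau y s \<le> h \<longleftrightarrow> - s * (sqrt_u s y * L (sqrt_u s) y) \<le> h * u y s"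
proof -
  have f: "0 < sqrt_u s y" using sqrt_u_pos assms by simp
  have "li_yau y s \<le> h \<longleftrightarrow> - s * L (sqrt_u s) y \<le> h * sqrt_u s y"
    unfolding li_yau_def by (rule pos_divide_le_eq[OF f])
  also have "\<dots> \<longleftrightarrow> sqrt_u s y * (- s * L (sqrt_u s) y) \<le> sqrt_u s y * (h * sqrt_u s y)"
    using f by (simp only: mult_le_cancel_left_pos)
  finally show ?thesis using sqrt_u_square[OF assms] by (simp add: algebra_simps)
qed

lemma li_yau_mult_u:
  assumes "y \<in> V" "0 \<le> s"
  shows "li_yau y s * u y s = - s * (sqrt_u s y * L (sqrt_u s) y)"
  using sqrt_u_pos[OF assms] sqrt_u_square[OF assms, symmetric] unfolding li_yau_def
  by (simp add: field_simps)

lemma Gam2_tilde_le_at_li_yau_max: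
  assumes x: "x \<in> V" and t: "0 < t"
    and max: "\<And>y s. y \<in> V \<Longrightarrow> s \<in> {0..t} \<Longrightarrow> li_yau y s \<le> li_yau x t"
  shows "2 * t * Gam2_tilde V E w mu (sqrt_u t) x \<le> - sqrt_u t x * L (sqrt_u t) x"
proof -
  define h where "h = li_yau x t"
  define f where "f = sqrt_u t"
  define p where "p = (\<lambda>y. L f y + G f f y / f y)"
  define Q where "Q = (\<lambda>s y. sqrt_u s y * L (sqrt_u s) y)"
  define Dq where "Dq = p x * L f x + f x * L p x"
  have below: "- s * Q s y - h * u y s \<le> 0" if "y \<in> V" "s \<in> {0..t}" for y s
    using max[OF that] li_yau_le_iff[of y s h] that unfolding Q_def h_def by auto
  have at_max: "- t * Q t x - h * u x t = 0"
    using li_yau_mult_u[OF x less_imp_le[OF t]] unfolding Q_def h_def by simp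
  have dp: "((\<lambda>s. sqrt_u s y) has_real_derivative p y) (at t)" if "y \<in> V" for y
    using sqrt_u_has_real_derivative[OF that t] unfolding p_def f_def .
  have "((\<lambda>s. Q s x) has_real_derivative Dq) (at t)"
    using DERIV_mult[OF dp[OF x]
        laplacian_has_real_derivative[where F = sqrt_u and F' = p and E = E and w = w and mu = mu, OF x dp]]
    unfolding Q_def Dq_def f_def by (simp add: mult.commute)
  then have "((\<lambda>s. - s * Q s x - h * u x s) has_real_derivative - Q t x - t * Dq - h * ut x t) (at t)"
    by (auto intro!: derivative_eq_intros u_has_real_derivative x t)
  then have time: "0 \<le> - Q t x - t * Dq - h * ut x t"
    by (rule DERIV_nonneg_at_left_max[OF _ t]) (use below at_max x in auto)
  have "L (\<lambda>y. - t * Q t y - h * u y t) x \<le> 0"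
    using below at_max t x
    by (intro laplacian_nonpos_at_local_max[OF graph x]) (auto simp: nbrs_def)
  then have space: "- t * L (Q t) x - h * L (\<lambda>y. u y t) x \<le> 0"
    by (simp only: laplacian_diff laplacian_cmult)
  have f_pos: "\<And>y. y \<in> V \<Longrightarrow> 0 < f y" using sqrt_u_pos t unfolding f_def by simp
  have "2 * Gam2_tilde V E w mu f x = Dq - L (Q t) x"
    using Gam2_tilde_eq[OF f_pos x p_def] unfolding f_def Dq_def Q_def by simp
  then have "2 * t * Gam2_tilde V E w mu f x = t * (Dq - L (Q t) x)"
    by (simp add: mult.commute)
  also have "\<dots> = t * Dq - t * L (Q t) x" by (rule right_diff_distrib)
  finally have "2 * t * Gam2_tilde V E w mu f x \<le> - Q t x"
    using time[unfolded heat[OF x less_imp_le[OF t]]] space by linarith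
  then show ?thesis unfolding f_def Q_def by simp
qed

end

theorem mainTheorem1:
  fixes V :: "'v set" and E :: "'v \<Rightarrow> 'v \<Rightarrow> bool" and w :: "'v \<Rightarrow> 'v \<Rightarrow> real"
    and mu :: "'v \<Rightarrow> real" and n K :: real
    and u ut :: "'v \<Rightarrow> real \<Rightarrow> real"
  assumes fin: "finite V"
    and graph: "weighted_graph V E w mu"
    and n_pos: "n > 0" and K_pos: "K > 0"
    and cde: "CDE V E w mu n (- K)"
    and u_pos: "\<And>x t. x \<in> V \<Longrightarrow> t \<ge> 0 \<Longrightarrow> u x t > 0"
    and u_deriv: "\<And>x t. x \<in> V \<Longrightarrow> t \<ge> 0 \<Longrightarrow>
                    ((\<lambda>s. u x s) has_real_derivative ut x t) (at t within {0..})"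
    and ut_cont: "\<And>x. x \<in> V \<Longrightarrow> continuous_on {0..} (ut x)"
    and heat: "\<And>x t. x \<in> V \<Longrightarrow> t \<ge> 0 \<Longrightarrow> ut x t = laplacian V E w mu (\<lambda>y. u y t) x"
  shows "\<forall>t>0. \<forall>x\<in>V.
     Gam V E w mu (\<lambda>y. sqrt (u y t)) (\<lambda>y. sqrt (u y t)) x / u x t
       - deriv (\<lambda>s. sqrt (u x s)) t / sqrt (u x t)
     \<le> n / (2 * t) + sqrt (1/2 * n * K * D_mu V E w mu * (D_w V E w + 1))"
proof (intro allI impI ballI)
  fix T :: real and x0 assume T: "0 < T" and x0: "x0 \<in> V"
  interpret heat_solution V E w mu u ut
    using graph u_pos u_deriv heat by unfold_locales auto
  define B where "B = 1/2 * n * K * D_mu V E w mu * (D_w V E w + 1)"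
  have B: "0 \<le> B"
    unfolding B_def using D_mu_nonneg[OF fin graph x0] D_w_nonneg[OF fin graph] n_pos K_pos by simp
  obtain x t where x: "x \<in> V" and t: "t \<in> {0..T}"
    and max: "\<And>y s. y \<in> V \<Longrightarrow> s \<in> {0..T} \<Longrightarrow> li_yau y s \<le> li_yau x t"
    by (rule finite_family_attains_max[where a = 0 and b = T and g = li_yau])
      (use fin x0 T continuous_on_li_yau in auto)
  have "li_yau x t \<le> n / 2 + T * sqrt B"
  proof (cases "t = 0")
    case True
    then show ?thesis using n_pos T B unfolding li_yau_def by simp
  next
    case False
    then have t_pos: "0 < t" using t by simp
    have "2 * t * Gam2_tilde V E w mu (sqrt_u t) x \<le> - sqrt_u t x * L (sqrt_u t) x"
      using Gam2_tilde_le_at_li_yau_max[OF x t_pos] max t by auto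
    then have "li_yau x t \<le> n / 2 + t * sqrt B"
      using Li_Yau_bound_of_Gam2_tilde_le[OF fin graph n_pos K_pos cde _ x t_pos] sqrt_u_pos t_pos
      unfolding li_yau_def B_def by simp
    also have "\<dots> \<le> n / 2 + T * sqrt B" using t B by (simp add: mult_right_mono)
    finally show ?thesis .
  qed
  then have "li_yau x0 T / T \<le> (n / 2 + T * sqrt B) / T"
    using max[OF x0, of T] T by (intro divide_right_mono) auto
  also have "\<dots> = n / (2 * T) + sqrt B" using T by (simp add: add_divide_distrib)
  finally show "Gam V E w mu (\<lambda>y. sqrt (u y T)) (\<lambda>y. sqrt (u y T)) x0 / u x0 T
       - deriv (\<lambda>s. sqrt (u x0 s)) T / sqrt (u x0 T)
     \<le> n / (2 * T) + sqrt (1/2 * n * K * D_mu V E w mu * (D_w V E w + 1))"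
    unfolding Li_Yau_expression_eq[OF x0 T] B_def .
qed

end
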